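(* Let $X\subset\mathbb{R}^d$ be compact with Lebesgue measure $\mu$, and let $\mathcal{D}$ be a set of real functions on $X$ which contains, for every probability measure $\mathbb{R}$ on $X$ absolutely continuous with respect to $\mu$ with piecewise continuous density $f_\mathbb{R}$, every $m\ge2$ and every sequence $0=\alpha_1<\dots<\alpha_m$, the indicator functions $\mathbf{1}_{A_i(\mathbb{R})}$, $i=1,\dots,m-1$, where $A_i(\mathbb{R})=\{x\in X:f_\mathbb{R}(x)\ge\alpha_i\}\setminus\{x\in X: f_\mathbb{R}(x)\ge\alpha_{i+1}\}$. If $\mathbb{P},\mathbb{Q}$ are two such probability measures with $\int\phi\,d\mathbb{P}=\int\phi\,d\mathbb{Q}$ for all $\phi\in\mathcal{D}$, then $\mathbb{P}=\mathbb{Q}$.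
   Context: A probability measure is regarded as the linear functional $\phi\mapsto\langle\mathbb{P},\phi\rangle=\int\phi\,d\mathbb{P}$ on a space of test functions $\mathcal{D}$; $\mathbb{P}$ and $\mathbb{Q}$ are said to be equal on $\mathcal{D}$ if $\langle\mathbb{P},\phi\rangle=\langle\mathbb{Q},\phi\rangle$ for all $\phi\in\mathcal{D}$, and $\mathcal{D}$ is "rich enough to discriminate among PMs" if equality on $\mathcal{D}$ implies $\mathbb{P}=\mathbb{Q}$. The sets $A_i(\mathbb{R})$ are the $\alpha$-level sets of $\mathbb{R}$. *)

theory Defs
  imports "HOL-Probability.Probability"
begin

definition leb_on :: "'a::euclidean_space set \<Rightarrow> 'a measure" where
  "leb_on X = restrict_space lborel X"

definition piecewise_continuous_on :: "'a::topological_space set \<Rightarrow> ('a \<Rightarrow> real) \<Rightarrow> bool" where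
  "piecewise_continuous_on X f \<longleftrightarrow>
     (\<exists>\<P>. finite \<P> \<and> disjoint \<P> \<and> \<Union>\<P> = X \<and> (\<forall>S\<in>\<P>. continuous_on S f))"

definition pc_prob_density :: "'a::euclidean_space set \<Rightarrow> ('a \<Rightarrow> real) \<Rightarrow> bool" where
  "pc_prob_density X f \<longleftrightarrow>
     f \<in> borel_measurable (leb_on X) \<and> (\<forall>x\<in>X. 0 \<le> f x) \<and>
     piecewise_continuous_on X f \<and>
     prob_space (density (leb_on X) (\<lambda>x. ennreal (f x)))"

definition level_set_diff :: "'a set \<Rightarrow> ('a \<Rightarrow> real) \<Rightarrow> (nat \<Rightarrow> real) \<Rightarrow> nat \<Rightarrow> 'a set" where
  "level_set_diff X f \<alpha> i = {x\<in>X. f x \<ge> \<alpha> i} - {x\<in>X. f x \<ge> \<alpha> (Suc i)}"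

end

theory Submission
  imports Defs
begin

text \<open>If integrable f, g \<ge> 0 have the same integral over every sublevel set {f < c} and
  {g < c} with c > 0, then (f - g) (1_{g < c} - 1_{f < c}) is nonnegative with vanishing integral,
  so {f < c} and {g < c} agree up to a null set; taking all positive rational c gives f = g almost
  everywhere. For a density f \<ge> 0 the sublevel set {f < c} is the set A_1 for the two levels
  0 < c, so the hypothesis on D yields exactly these identities for the densities of P and Q.\<close>

lemma eq_if_same_rational_sublevels:
  fixes a b :: real
  assumes "0 \<le> a" "0 \<le> b" and "\<And>q::rat. 0 < q \<Longrightarrow> a < of_rat q \<longleftrightarrow> b < of_rat q"
  shows "a = b"
proof -
  have no_gap: "\<not> x < y"
    if "0 \<le> x" and sublevels: "\<And>q::rat. 0 < q \<Longrightarrow> x < of_rat q \<longleftrightarrow> y < of_rat q" for x y :: real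
  proof
    assume "x < y"
    then obtain q where q: "x < of_rat q" "of_rat q < y" using of_rat_dense by blast
    with \<open>0 \<le> x\<close> have "0 < q" by (metis order_le_less_trans zero_less_of_rat_iff)
    with q sublevels[of q] show False by simp
  qed
  have "\<not> a < b"
    by (rule no_gap) (use assms in auto)
  moreover have "\<not> b < a"
    by (rule no_gap) (use assms in auto)
  ultimately show ?thesis by simp
qed

lemma AE_sublevel_iff_if_set_integrals_eq:
  fixes f g :: "'a \<Rightarrow> real"
  assumes f: "integrable M f" and g: "integrable M g"
    and on_f_sublevel: "(\<integral>x\<in>{x\<in>space M. f x < c}. f x \<partial>M) = (\<integral>x\<in>{x\<in>space M. f x < c}. g x \<partial>M)"
    and on_g_sublevel: "(\<integral>x\<in>{x\<in>space M. g x < c}. f x \<partial>M) = (\<integral>x\<in>{x\<in>space M. g x < c}. g x \<partial>M)"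
  shows "AE x in M. f x < c \<longleftrightarrow> g x < c"
proof -
  define A where "A = {x\<in>space M. f x < c}"
  define B where "B = {x\<in>space M. g x < c}"
  define h where "h x = (f x - g x) * (indicator B x - indicator A x)" for x
  have sets: "A \<in> sets M" "B \<in> sets M"
    using borel_measurable_integrable[OF f] borel_measurable_integrable[OF g]
    unfolding A_def B_def by measurable
  have set_integrable: "set_integrable M S f" "set_integrable M S g" if "S \<in> sets M" for S
    using that f g integrable_mult_indicator unfolding set_integrable_def by blast+
  have diff_integrable: "integrable M (\<lambda>x. indicator S x * (f x - g x))" if "S \<in> sets M" for S
    using set_integral_diff(1)[OF set_integrable[OF that]] by (simp add: set_integrable_def)
  have h_split: "h = (\<lambda>x. indicator B x * (f x - g x) - indicator A x * (f x - g x))"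
    by (auto simp: h_def algebra_simps)
  have h_integrable: "integrable M h"
    unfolding h_split using diff_integrable sets by auto
  have "integral\<^sup>L M h = (\<integral>x\<in>B. f x - g x \<partial>M) - (\<integral>x\<in>A. f x - g x \<partial>M)"
    unfolding h_split set_lebesgue_integral_def using diff_integrable sets by simp
  also have "\<dots> = 0"
    using set_integrable sets on_f_sublevel on_g_sublevel
    unfolding A_def[symmetric] B_def[symmetric] by simp
  moreover have "AE x in M. 0 \<le> h x"
    by (auto simp: h_def A_def B_def indicator_def)
  ultimately have h_zero: "AE x in M. h x = 0"
    using integral_nonneg_eq_0_iff_AE[OF h_integrable] by simp
  have level_iff: "f x < c \<longleftrightarrow> g x < c" if "x \<in> space M" "h x = 0" for x
    using that by (cases "f x < c"; cases "g x < c") (auto simp: h_def A_def B_def)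
  from h_zero AE_space show ?thesis
    by eventually_elim (use level_iff in blast)
qed

lemma AE_eq_if_sublevel_set_integrals_eq:
  fixes f g :: "'a \<Rightarrow> real"
  assumes f: "integrable M f" and g: "integrable M g"
    and nonneg: "AE x in M. 0 \<le> f x" "AE x in M. 0 \<le> g x"
    and on_f_sublevels: "\<And>c. 0 < c \<Longrightarrow>
      (\<integral>x\<in>{x\<in>space M. f x < c}. f x \<partial>M) = (\<integral>x\<in>{x\<in>space M. f x < c}. g x \<partial>M)"
    and on_g_sublevels: "\<And>c. 0 < c \<Longrightarrow>
      (\<integral>x\<in>{x\<in>space M. g x < c}. f x \<partial>M) = (\<integral>x\<in>{x\<in>space M. g x < c}. g x \<partial>M)"
  shows "AE x in M. f x = g x"
proof -
  have "AE x in M. \<forall>q::rat. 0 < q \<longrightarrow> (f x < of_rat q \<longleftrightarrow> g x < of_rat q)"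
    using f g on_f_sublevels on_g_sublevels
    by (subst AE_all_countable) (auto intro!: AE_sublevel_iff_if_set_integrals_eq)
  with nonneg show ?thesis
    by eventually_elim (auto intro: eq_if_same_rational_sublevels)
qed

lemma integral_indicator_density:
  fixes f :: "'a \<Rightarrow> real"
  assumes "f \<in> borel_measurable M" "AE x in M. 0 \<le> f x" "A \<in> sets M"
  shows "(\<integral>x. indicator A x \<partial>density M (\<lambda>x. ennreal (f x))) = (\<integral>x\<in>A. f x \<partial>M)"
  using assms by (subst integral_density) (auto simp: set_lebesgue_integral_def mult.commute)

lemma space_leb_on [simp]: "space (leb_on X) = X"
  by (simp add: leb_on_def space_restrict_space)

lemma pc_prob_density_AE_nonneg:
  assumes "pc_prob_density X f"
  shows "AE x in leb_on X. 0 \<le> f x"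
  using assms by (auto simp: pc_prob_density_def intro: AE_I2)

lemma pc_prob_density_integrable:
  assumes "pc_prob_density X f"
  shows "integrable (leb_on X) f"
proof -
  have f: "f \<in> borel_measurable (leb_on X)" "\<forall>x\<in>X. 0 \<le> f x"
    and prob: "prob_space (density (leb_on X) (\<lambda>x. ennreal (f x)))"
    using assms by (simp_all add: pc_prob_density_def)
  have "(\<integral>\<^sup>+x. ennreal (f x) \<partial>leb_on X)
      = emeasure (density (leb_on X) (\<lambda>x. ennreal (f x))) (space (leb_on X))"
    using f by (auto simp del: space_leb_on simp: emeasure_density intro!: nn_integral_cong)
  also have "\<dots> = 1"
    using prob_space.emeasure_space_1[OF prob] by simp
  finally show ?thesis
    using f by (intro integrableI_nonneg) auto
qed

lemma pc_prob_density_sublevel_sets: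
  assumes "pc_prob_density X f"
  shows "{x\<in>X. f x < c} \<in> sets (leb_on X)"
proof -
  have "f \<in> borel_measurable (leb_on X)"
    using assms by (simp add: pc_prob_density_def)
  then have "{x\<in>space (leb_on X). f x < c} \<in> sets (leb_on X)"
    by measurable
  then show ?thesis by simp
qed

lemma pc_prob_density_integral_indicator:
  assumes "pc_prob_density X f" "A \<in> sets (leb_on X)"
  shows "(\<integral>x. indicator A x \<partial>density (leb_on X) (\<lambda>x. ennreal (f x))) = (\<integral>x\<in>A. f x \<partial>leb_on X)"
  using assms pc_prob_density_AE_nonneg
  by (intro integral_indicator_density) (auto simp: pc_prob_density_def)

lemma level_set_diff_two_levels:
  assumes "\<forall>x\<in>X. 0 \<le> f x"
  shows "level_set_diff X f (\<lambda>i. if i = 1 then 0 else c) 1 = {x\<in>X. f x < c}"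
  using assms by (auto simp: level_set_diff_def)

theorem corollary1:
  fixes X :: "'a::euclidean_space set" and D :: "('a \<Rightarrow> real) set"
    and P Q :: "'a measure" and fP fQ :: "'a \<Rightarrow> real"
  assumes "compact X"
    and D: "\<forall>f. pc_prob_density X f \<longrightarrow>
              (\<forall>(m::nat) (\<alpha>::nat \<Rightarrow> real).
                 2 \<le> m \<and> \<alpha> 1 = 0 \<and> (\<forall>i\<in>{1..<m}. \<alpha> i < \<alpha> (Suc i)) \<longrightarrow>
                 (\<forall>i\<in>{1..<m}. indicator (level_set_diff X f \<alpha> i) \<in> D))"
    and "pc_prob_density X fP" and "P = density (leb_on X) (\<lambda>x. ennreal (fP x))"
    and "pc_prob_density X fQ" and "Q = density (leb_on X) (\<lambda>x. ennreal (fQ x))"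
    and "\<forall>\<phi>\<in>D. (\<integral>x. \<phi> x \<partial>P) = (\<integral>x. \<phi> x \<partial>Q)"
  shows "P = Q"
proof -
  have sublevel_in_D: "indicator {x\<in>X. h x < c} \<in> D" if h: "pc_prob_density X h" and "0 < c" for h c
  proof -
    have "indicator (level_set_diff X h (\<lambda>i. if i = 1 then 0 else c) 1) \<in> D"
      by (rule D[rule_format, OF h, of 2]) (use \<open>0 < c\<close> in auto)
    moreover have "level_set_diff X h (\<lambda>i. if i = 1 then 0 else c) 1 = {x\<in>X. h x < c}"
      using h by (intro level_set_diff_two_levels) (simp add: pc_prob_density_def)
    ultimately show ?thesis
      by metis
  qed
  have set_integrals_eq:
    "(\<integral>x\<in>{x\<in>X. h x < c}. fP x \<partial>leb_on X) = (\<integral>x\<in>{x\<in>X. h x < c}. fQ x \<partial>leb_on X)"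
    if "pc_prob_density X h" "0 < c" for h c
    using assms(4,6,7) sublevel_in_D[OF that]
      pc_prob_density_integral_indicator[OF assms(3) pc_prob_density_sublevel_sets[OF that(1)]]
      pc_prob_density_integral_indicator[OF assms(5) pc_prob_density_sublevel_sets[OF that(1)]]
    by metis
  have "AE x in leb_on X. fP x = fQ x"
    using assms(3,5)
    by (intro AE_eq_if_sublevel_set_integrals_eq pc_prob_density_integrable pc_prob_density_AE_nonneg)
      (auto simp: set_integrals_eq)
  then show ?thesis
    unfolding assms(4,6) using assms(3,5) by (auto simp: pc_prob_density_def intro: density_cong)
qed

end
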